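(* Let $p\ge 3$ be a prime, $n\ge 2$ an integer, and $N=p^nN_1$, where either $N_1=1$ or $N_1=q_1q_2\cdots q_r$ with $q_1,\dots,q_r$ distinct primes different from $p$ such that $(q_i-1)\mid(p-1)$ for every $i$. Let $a,b$ be integers with $a\not\equiv 0,-1 \pmod p$ and $a\not\equiv -1\pmod{q_i}$ for every $i$, and let $\pi(x)=x^p+ax+b$ (such a $\pi$ permutes $\mathbb{Z}_N$). Let $\mathbf{s}$ be a Zadoff–Chu sequence of length $N$. Then (i) the interleaved sequence $\mathbf{s}\circ\pi$ is a CAZAC sequence; (ii) the interleaved sequence $\mathbf{s}\circ\pi^{-1}$ is a CAZAC sequence.
   Context: $\xi_N=e^{-2\pi\sqrt{-1}/N}$, and $\xi_N^{x/2}$ means $e^{-\pi\sqrt{-1}x/N}$. A Zadoff–Chu (ZC) sequence of length $N$ is $\mathbf{s}=(s(0),\dots,s(N-1))$ with $s(k)=\xi_N^{f(k)}$, $f(k)=u\,(k^2+(N\bmod 2)k+2lk)/2$, where $u$ is an integer with $\gcd(u,N)=1$ and $l$ is an arbitrary integer. A polynomial $\pi\in\mathbb{Z}_N[x]$ is a permutation polynomial (PP) over $\mathbb{Z}_N$ if $k\mapsto \pi(k)\bmod N$ is a bijection of $\mathbb{Z}_N=\{0,\dots,N-1\}$; $\pi^{-1}$ denotes the inverse permutation of $\mathbb{Z}_N$. For a permutation $\sigma$ of $\mathbb{Z}_N$, the interleaved sequence $\mathbf{s}\circ\sigma$ has $k$-th term $s(\sigma(k))$. The periodic auto-correlation of a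 length-$N$ sequence $\mathbf{y}$ is $\theta(d)=\sum_{k=0}^{N-1}y(k)y^*(k+d)$ with indices mod $N$. A sequence is CAZAC if all entries have modulus 1 and $\theta(d)=0$ for all $0<d<N$. *)

theory Defs
  imports Complex_Main "HOL-Number_Theory.Number_Theory"
begin

text \<open>Zadoff-Chu sequence of length N with parameters u, l:
  s(k) = xi_N^(f(k)), f(k) = u (k^2 + (N mod 2) k + 2 l k)/2, xi_N = exp(-2 pi i/N),
  i.e. s(k) = exp(- pi i u (k^2 + (N mod 2) k + 2 l k) / N).\<close>
definition zc_seq :: "nat \<Rightarrow> int \<Rightarrow> int \<Rightarrow> nat \<Rightarrow> complex" where
  "zc_seq N u l k = cis (- pi * real_of_int (u * (int k ^ 2 + int (N mod 2) * int k + 2 * l * int k)) / real N)"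

definition pp_map :: "nat \<Rightarrow> nat \<Rightarrow> int \<Rightarrow> int \<Rightarrow> nat \<Rightarrow> nat" where
  "pp_map N p a b k = nat ((int k ^ p + a * int k + b) mod int N)"

definition interleave :: "(nat \<Rightarrow> complex) \<Rightarrow> (nat \<Rightarrow> nat) \<Rightarrow> nat \<Rightarrow> complex" where
  "interleave s \<sigma> k = s (\<sigma> k)"

definition perm_inv :: "nat \<Rightarrow> (nat \<Rightarrow> nat) \<Rightarrow> nat \<Rightarrow> nat" where
  "perm_inv N \<sigma> = inv_into {..<N} \<sigma>"

definition autocorr :: "nat \<Rightarrow> (nat \<Rightarrow> complex) \<Rightarrow> nat \<Rightarrow> complex" where
  "autocorr N y d = (\<Sum>k<N. y k * cnj (y ((k + d) mod N)))"

definition CAZAC :: "nat \<Rightarrow> (nat \<Rightarrow> complex) \<Rightarrow> bool" where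
  "CAZAC N y \<longleftrightarrow> (\<forall>k<N. cmod (y k) = 1) \<and> (\<forall>d. 0 < d \<and> d < N \<longrightarrow> autocorr N y d = 0)"

end

theory Submission
  imports Defs
begin

text \<open>
  Write \<open>\<pi>(x) = x\<^sup>p + a x + b\<close> and \<open>N = p\<^sup>n M\<close> with \<open>M\<close> the product of the \<open>q \<in> Q\<close>.
  Since \<open>(q - 1) | (p - 1)\<close>, \<open>y\<^sup>p \<equiv> y\<close> modulo every \<open>q\<close>, so \<open>\<pi>\<close> is affine of slope \<open>1 + a\<close>
  modulo \<open>M\<close>; modulo \<open>p\<close> the difference quotient \<open>(\<pi>(y + s) - \<pi>(y)) / s\<close> is \<open>a\<close> or \<open>a + 1\<close> by
  Fermat. Both are units, so \<open>\<pi>\<close> permutes \<open>\<int>\<^sub>N\<close>.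

  For \<open>0 < d < N\<close> we look for a factorisation \<open>N = h m\<close> such that the second difference
  \<open>\<pi>(x+d+h) - \<pi>(x+d) - \<pi>(x+h) + \<pi>(x)\<close> (divisible by \<open>p d h\<close>, by \<open>M\<close> and by 2) vanishes
  modulo \<open>N\<close>. Then the index shift \<open>x \<mapsto> x + h\<close> multiplies every term of the autocorrelation sum
  by one and the same \<open>2N\<close>-th root of unity, and this root is not \<open>1\<close> because a certain residue
  is nonzero modulo \<open>m\<close>; hence the sum vanishes. If some \<open>q \<in> Q\<close> does not divide \<open>d\<close> take
  \<open>m = q\<close>; otherwise take \<open>m = p\<^sup>j\<^sup>+\<^sup>1\<close> where \<open>p\<^sup>j\<close> exactly divides \<open>d\<close>. For the inverse permutation the
  sum is first reindexed by \<open>\<pi>\<close>, and the residue is the gap \<open>\<pi>\<^sup>-\<^sup>1(\<pi>(x) + d) - x\<close>.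
\<close>

section \<open>Elementary number theory\<close>

lemma prime_dvd_power_add_diff:
  fixes y s :: int
  assumes "prime p"
  shows "int p * s dvd (y + s) ^ p - y ^ p - s ^ p"
proof -
  have p2: "p \<ge> 2" using assms prime_ge_2_nat by blast
  define f where "f k = of_nat (p choose k) * s ^ k * y ^ (p - k)" for k
  have "(y + s) ^ p = (\<Sum>k\<le>p. f k)"
    unfolding f_def by (subst add.commute) (rule binomial_ring)
  also have "{..p} = insert 0 (insert p {1..p-1})" using p2 by auto
  finally have "(y + s) ^ p - y ^ p - s ^ p = (\<Sum>k\<in>{1..p-1}. f k)"
    using p2 by (simp add: f_def)
  moreover have "int p * s dvd f k" if "k \<in> {1..p-1}" for k
  proof -
    have "p dvd p choose k" using that p2 assms by (intro dvd_choose_prime) auto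
    then have "int p dvd of_nat (p choose k)" by (simp add: int_dvd_int_iff)
    moreover have "s dvd s ^ k" using that by auto
    ultimately show ?thesis unfolding f_def by (simp add: mult_dvd_mono)
  qed
  ultimately show ?thesis by (auto intro: dvd_sum)
qed

lemma prime_dvd_power_second_diff:
  fixes x s h :: int
  assumes "prime p"
  shows "int p * s * h dvd (x + s + h) ^ p - (x + s) ^ p - (x + h) ^ p + x ^ p"
proof -
  have p2: "p \<ge> 2" using assms prime_ge_2_nat by blast
  define g where "g k = of_nat (p choose k) * h ^ k * ((x + s) ^ (p - k) - x ^ (p - k))" for k
  have "(x + s + h) ^ p - (x + h) ^ p = (\<Sum>k\<le>p. g k)"
    using binomial_ring[of h "x + s" p] binomial_ring[of h x p]
    by (simp add: g_def sum_subtractf[symmetric] algebra_simps)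
  also have "{..p} = insert 0 {1..p}" by auto
  finally have eq: "(x + s + h) ^ p - (x + s) ^ p - (x + h) ^ p + x ^ p = (\<Sum>k\<in>{1..p}. g k)"
    by (simp add: g_def algebra_simps)
  have "int p * s * h dvd g k" if "k \<in> {1..p}" for k
  proof (cases "k = p")
    case True then show ?thesis unfolding g_def by simp
  next
    case False
    have "p dvd p choose k" using that p2 assms False by (intro dvd_choose_prime) auto
    then have "int p dvd of_nat (p choose k)" by (simp add: int_dvd_int_iff)
    moreover have "h dvd h ^ k" using that by auto
    moreover have "s dvd (x + s) ^ (p - k) - x ^ (p - k)"
      using power_diff_sumr2[of "x + s" "p - k" x] by simp
    ultimately have "int p * h * s dvd g k" unfolding g_def by (intro mult_dvd_mono) auto
    then show ?thesis by (simp add: ac_simps)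
  qed
  then show ?thesis unfolding eq by (rule dvd_sum)
qed

lemma fermat_theorem_int:
  fixes y :: int
  assumes "prime q" "\<not> int q dvd y"
  shows "[y ^ (q - 1) = 1] (mod int q)"
proof -
  have q0: "q > 0" using assms prime_gt_0_nat by blast
  define z where "z = nat (y mod int q)"
  have zy: "[int z = y] (mod int q)" unfolding z_def using q0 by (simp add: cong_def)
  have "\<not> q dvd z"
    using assms(2) zy by (metis cong_dvd_iff int_dvd_int_iff)
  then have "[z ^ (q - 1) = 1] (mod q)" using assms by (intro fermat_theorem) auto
  then have "[int z ^ (q - 1) = 1] (mod int q)" by (metis cong_int_iff of_nat_1 of_nat_power)
  moreover have "[int z ^ (q - 1) = y ^ (q - 1)] (mod int q)" using zy by (rule cong_pow)
  ultimately show ?thesis by (meson cong_sym cong_trans)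
qed

lemma power_cong_self_if_prime_minus_one_dvd:
  fixes y :: int
  assumes "prime q" "(q - 1) dvd (p - 1)" "p \<ge> 1"
  shows "[y ^ p = y] (mod int q)"
proof (cases "int q dvd y")
  case True
  moreover have "y dvd y ^ p" using assms(3) by (intro dvd_power) auto
  ultimately have "int q dvd y ^ p" by (rule dvd_trans)
  with True show ?thesis by (simp add: cong_def dvd_eq_mod_eq_0)
next
  case False
  obtain k where k: "p - 1 = (q - 1) * k" using assms(2) by blast
  have "y ^ p = y * (y ^ (q - 1)) ^ k" using assms(3) k
    by (metis power_mult power_Suc Suc_diff_1 less_le_trans zero_less_one)
  moreover have "[y * (y ^ (q - 1)) ^ k = y * 1 ^ k] (mod int q)"
    using fermat_theorem_int[OF assms(1) False] by (intro cong_mult cong_pow) auto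
  ultimately show ?thesis by simp
qed

lemma prod_primes_dvd:
  fixes s :: int
  assumes "finite Q" "\<forall>q\<in>Q. prime q" "\<forall>q\<in>Q. int q dvd s"
  shows "int (\<Prod>Q) dvd s"
proof -
  have "[s = 0] (mod (\<Prod>q\<in>Q. int q))"
    using assms by (intro cong_cong_prod_coprime) (auto simp: cong_0_iff primes_coprime)
  then show ?thesis by (simp add: cong_0_iff)
qed

lemma prime_power_dvd_iff_of_mult_cong:
  fixes A g D :: int
  assumes "prime p" "\<not> p dvd g" "[A * g = D] (mod p ^ j)"
  shows "p ^ j dvd A \<longleftrightarrow> p ^ j dvd D"
proof -
  have "coprime (p ^ j) g"
    using assms(1,2) by (simp add: prime_imp_coprime coprime_power_left_iff)
  then have "p ^ j dvd A \<longleftrightarrow> p ^ j dvd A * g" by (simp add: coprime_dvd_mult_left_iff)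
  also have "\<dots> \<longleftrightarrow> p ^ j dvd D" using assms(3) by (rule cong_dvd_iff)
  finally show ?thesis .
qed

lemma prime_power_dvd_diff_of_mult_cong:
  fixes A A' g g' D :: int
  assumes "prime p" "\<not> p dvd g" "[g = g'] (mod p)" "p ^ j dvd D"
    and "[A * g = D] (mod p ^ Suc j)" "[A' * g' = D] (mod p ^ Suc j)"
  shows "p ^ Suc j dvd A - A'"
proof -
  have "\<not> p dvd g'" using assms(2,3) cong_dvd_iff by blast
  moreover have "[A' * g' = D] (mod p ^ j)"
    using assms(6) by (rule cong_dvd_modulus) (simp add: le_imp_power_dvd)
  ultimately have "p ^ j dvd A'"
    using assms(1,4) prime_power_dvd_iff_of_mult_cong by blast
  moreover have "p dvd g - g'" using assms(3) by (simp add: cong_iff_dvd_diff)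
  ultimately have "p ^ j * p dvd A' * (g - g')" by (rule mult_dvd_mono)
  moreover have "p ^ Suc j dvd A * g - A' * g'"
    using assms(5,6) by (metis cong_iff_dvd_diff cong_sym cong_trans)
  ultimately have "p ^ Suc j dvd (A - A') * g"
    using dvd_diff[of _ "A * g - A' * g'" "A' * (g - g')"] by (simp add: algebra_simps)
  then show ?thesis
    using assms(1,2) by (simp add: coprime_dvd_mult_left_iff prime_imp_coprime coprime_power_left_iff)
qed

section \<open>Periodic sums and the Zadoff-Chu phase\<close>

lemma sum_lessThan_shift_periodic:
  fixes T :: "nat \<Rightarrow> 'a::cancel_comm_monoid_add"
  assumes per: "\<And>k. T (k + N) = T k"
  shows "(\<Sum>k<N. T (k + h)) = (\<Sum>k<N. T k)"
proof (induction h)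
  case (Suc h)
  have "T h + (\<Sum>k<N. T (Suc k + h)) = (\<Sum>k<Suc N. T (k + h))"
    by (simp only: sum.lessThan_Suc_shift) simp
  also have "\<dots> = T h + (\<Sum>k<N. T (k + h))"
    using per[of h] by (simp add: add.commute)
  finally show ?case using Suc by simp
qed simp

lemma sum_periodic_eq_0_if_shift_mult:
  fixes T :: "nat \<Rightarrow> 'a::idom"
  assumes "\<And>k. T (k + N) = T k" and "\<And>k. T (k + h) = T k * w" and "w \<noteq> 1"
  shows "(\<Sum>k<N. T k) = 0"
proof -
  have "(\<Sum>k<N. T k) = (\<Sum>k<N. T (k + h))"
    using sum_lessThan_shift_periodic[of T N h] assms(1) by simp
  also have "\<dots> = (\<Sum>k<N. T k) * w" by (simp add: assms(2) sum_distrib_right)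
  finally have "(\<Sum>k<N. T k) * (1 - w) = 0" by (simp add: algebra_simps)
  with assms(3) show ?thesis by simp
qed

text \<open>\<open>half_root N X\<close> is the paper's \<open>\<xi>\<^sub>N\<close> raised to the power \<open>-X/2\<close>.\<close>

definition half_root :: "nat \<Rightarrow> int \<Rightarrow> complex" where
  "half_root N X = cis (pi * of_int X / real N)"

lemma half_root_add: "half_root N X * half_root N Y = half_root N (X + Y)"
  unfolding half_root_def by (simp add: cis_mult add_divide_distrib algebra_simps)

lemma cnj_half_root: "cnj (half_root N X) = half_root N (- X)"
  unfolding half_root_def by (simp add: cis_cnj)

lemma norm_half_root: "cmod (half_root N X) = 1"
  unfolding half_root_def by simp

lemma half_root_cong:
  assumes "N > 0" and "[X = Y] (mod 2 * int N)"
  shows "half_root N X = half_root N Y"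
proof -
  obtain t where t: "Y = X + 2 * int N * t" using assms(2) cong_iff_lin by blast
  have "pi * of_int Y / real N = pi * of_int X / real N + 2 * pi * of_int t"
    using assms(1) unfolding t by (simp add: field_simps)
  then have "half_root N Y = half_root N X * cis (2 * pi * of_int t)"
    by (simp only: half_root_def cis_mult)
  also have "cis (2 * pi * of_int t) = 1" by (rule cis_multiple_2pi) simp
  finally show ?thesis by simp
qed

lemma half_root_eq_1_iff:
  assumes "N > 0"
  shows "half_root N X = 1 \<longleftrightarrow> 2 * int N dvd X"
proof
  assume "half_root N X = 1"
  then have "cos (pi * of_int X / real N) = 1"
    unfolding half_root_def by (metis cis.sel(1) one_complex.sel(1))
  then obtain k :: int where "pi * of_int X / real N = of_int k * 2 * pi"
    using cos_one_2pi_int by blast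
  then have "real_of_int X = real_of_int (2 * int N * k)"
    using assms by (simp add: field_simps)
  then show "2 * int N dvd X" by (simp only: of_int_eq_iff) simp
next
  assume "2 * int N dvd X"
  then have "half_root N X = half_root N 0"
    using assms by (metis half_root_cong cong_0_iff)
  then show "half_root N X = 1" by (simp add: half_root_def)
qed

definition zc_phase :: "nat \<Rightarrow> int \<Rightarrow> int \<Rightarrow> int" where
  "zc_phase N l x = x ^ 2 + (int (N mod 2) + 2 * l) * x"

definition zc_val :: "nat \<Rightarrow> int \<Rightarrow> int \<Rightarrow> int \<Rightarrow> complex" where
  "zc_val N u l x = half_root N (- u * zc_phase N l x)"

lemma zc_seq_eq_zc_val: "zc_seq N u l k = zc_val N u l (int k)"
proof -
  have "- pi * of_int (u * (int k ^ 2 + int (N mod 2) * int k + 2 * l * int k)) / real N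
      = pi * of_int (- u * zc_phase N l (int k)) / real N"
    unfolding zc_phase_def by (simp add: algebra_simps)
  then show ?thesis unfolding zc_seq_def zc_val_def half_root_def by (simp only:)
qed

lemma norm_zc_val: "cmod (zc_val N u l x) = 1"
  unfolding zc_val_def by (rule norm_half_root)

lemma zc_val_mult_cnj:
  "zc_val N u l x * cnj (zc_val N u l y) = half_root N (u * (zc_phase N l y - zc_phase N l x))"
  unfolding zc_val_def by (simp add: cnj_half_root half_root_add algebra_simps)

text \<open>The linear term \<open>N mod 2\<close> of the phase is what makes the sequence \<open>N\<close>-periodic
  for odd \<open>N\<close>.\<close>

lemma zc_phase_cong:
  assumes "[x = y] (mod int N)"
  shows "[zc_phase N l x = zc_phase N l y] (mod 2 * int N)"
proof -
  obtain t where t: "y = x + int N * t" using assms cong_iff_lin by blast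
  have "even (t * (int N * t + int (N mod 2) + 2 * l))"
    by (cases "even N"; cases "even t") (auto simp: odd_iff_mod_2_eq_one)
  then obtain r where r: "t * (int N * t + int (N mod 2) + 2 * l) = 2 * r" by blast
  have "zc_phase N l y = zc_phase N l x + int N * (2 * x * t + t * (int N * t + int (N mod 2) + 2 * l))"
    unfolding zc_phase_def t power2_eq_square by (simp add: algebra_simps)
  also have "\<dots> = zc_phase N l x + 2 * int N * (x * t + r)"
    unfolding r by (simp add: algebra_simps)
  finally show ?thesis by (simp add: cong_iff_lin)
qed

lemma zc_val_cong:
  assumes "N > 0" and "[x = y] (mod int N)"
  shows "zc_val N u l x = zc_val N u l y"
  unfolding zc_val_def
  using assms by (intro half_root_cong cong_mult cong_refl zc_phase_cong)

lemma zc_phase_second_diff: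
  assumes "int N dvd A - B - C + D" and "even (A - B - C + D)"
  shows "[zc_phase N l D - zc_phase N l C - (zc_phase N l B - zc_phase N l A)
    = 2 * (D - B) * (B - A)] (mod 2 * int N)"
proof -
  define w where "w = A - B - C + D"
  define c where "c = int (N mod 2) + 2 * l"
  have "zc_phase N l D - zc_phase N l C - (zc_phase N l B - zc_phase N l A)
      = w * (w + 2 * C + c) + 2 * (D - B) * (B - A)"
    unfolding zc_phase_def w_def c_def power2_eq_square by (simp add: algebra_simps)
  moreover have "2 * int N dvd w * (w + 2 * C + c)"
  proof (cases "even N")
    case True
    then have "c = 2 * l" by (simp add: c_def)
    moreover have "even w" using assms(2) by (simp only: w_def)
    ultimately have "even (w + 2 * C + c)" by simp
    then show ?thesis using assms(1) by (metis w_def mult_dvd_mono mult.commute)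
  next
    case False
    then have "coprime 2 (int N)" by simp
    then show ?thesis using assms by (simp add: w_def divides_mult)
  qed
  ultimately show ?thesis by (simp add: cong_iff_dvd_diff)
qed

section \<open>The permutation polynomial\<close>

locale pp_modulus =
  fixes p n :: nat and Q :: "nat set" and a b :: int and N :: nat
  assumes prime_p: "prime p" and finite_Q: "finite Q"
    and Q_primes: "\<forall>q\<in>Q. prime q \<and> q \<noteq> p \<and> (q - 1) dvd (p - 1)"
    and N_eq: "N = p ^ n * (\<Prod>Q)"
    and a_not_0_mod_p: "\<not> [a = 0] (mod int p)" and a_not_minus_1_mod_p: "\<not> [a = -1] (mod int p)"
    and a_not_minus_1_mod_Q: "\<forall>q\<in>Q. \<not> [a = -1] (mod int q)"
begin

definition M :: nat where "M = \<Prod>Q"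

definition P :: "int \<Rightarrow> int" where "P x = x ^ p + a * x + b"

lemma int_N_eq: "int N = int p ^ n * int M"
  unfolding N_eq M_def by simp

lemma N_pos: "N > 0"
  unfolding N_eq using finite_Q Q_primes prime_p by (auto intro!: prod_pos simp: prime_gt_0_nat)

lemma q_dvd_N: "q \<in> Q \<Longrightarrow> int q dvd int N"
  unfolding N_eq using finite_Q by (simp add: dvd_prod_eqI)

lemma M_dvdI: "(\<And>q. q \<in> Q \<Longrightarrow> int q dvd s) \<Longrightarrow> int M dvd s"
  unfolding M_def using prod_primes_dvd[of Q s] finite_Q Q_primes by auto

lemma coprime_p_M: "coprime (int p) (int M)"
proof -
  have "\<not> p dvd M"
  proof
    assume "p dvd M"
    then obtain q where "q \<in> Q" "p dvd q"
      using prime_dvd_prod_iff[of Q p "\<lambda>x. x"] finite_Q prime_p unfolding M_def by auto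
    then show False using Q_primes prime_p by (metis primes_dvd_imp_eq)
  qed
  then show ?thesis using prime_p by (simp add: prime_imp_coprime)
qed

lemma P_cong: "[x = y] (mod m) \<Longrightarrow> [P x = P y] (mod m)"
  unfolding P_def by (intro cong_add cong_mult cong_pow cong_refl)

lemma N_factor_nonzero: "int N = int h * m \<Longrightarrow> int h \<noteq> 0"
  using N_pos by (metis mult_zero_left of_nat_eq_0_iff not_gr0)

lemma P_diff_cong_Q:
  assumes "q \<in> Q"
  shows "[P (y + s) - P y = (1 + a) * s] (mod int q)"
proof -
  have pow: "[z ^ p = z] (mod int q)" for z
    using assms Q_primes prime_gt_0_nat[OF prime_p]
    by (intro power_cong_self_if_prime_minus_one_dvd) auto
  have "[P (y + s) - P y = ((y + s) + a * (y + s) + b) - (y + a * y + b)] (mod int q)"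
    unfolding P_def by (intro cong_diff cong_add cong_refl pow)
  then show ?thesis by (simp add: algebra_simps)
qed

text \<open>The difference quotient; \<open>slope y 0 = 0\<close> is a junk value.\<close>

definition slope :: "int \<Rightarrow> int \<Rightarrow> int" where
  "slope y s = (P (y + s) - P y) div s"

lemma P_diff_expansion: "\<exists>t. P (y + s) - P y = s * (a + s ^ (p - 1) + int p * t)"
proof -
  obtain t where t: "(y + s) ^ p - y ^ p - s ^ p = int p * s * t"
    using prime_dvd_power_add_diff[OF prime_p, of s y] by (auto simp: dvd_def)
  have "s ^ p = s * s ^ (p - 1)"
    using prime_gt_0_nat[OF prime_p] by (metis Suc_diff_1 power_Suc)
  then have "P (y + s) - P y = s * (a + s ^ (p - 1) + int p * t)"
    using t unfolding P_def by (simp add: algebra_simps)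
  then show ?thesis ..
qed

lemma
  assumes "s \<noteq> 0"
  shows P_diff_eq_slope: "P (y + s) - P y = s * slope y s"
    and slope_cong_p: "[slope y s = a + (if int p dvd s then 0 else 1)] (mod int p)"
proof -
  obtain t where t: "P (y + s) - P y = s * (a + s ^ (p - 1) + int p * t)"
    using P_diff_expansion by blast
  then have slope: "slope y s = a + s ^ (p - 1) + int p * t"
    unfolding slope_def using assms by simp
  then show "P (y + s) - P y = s * slope y s" using t by simp
  have "[s ^ (p - 1) = (if int p dvd s then 0 else 1)] (mod int p)"
  proof (cases "int p dvd s")
    case True
    moreover have "p - 1 > 0" using prime_ge_2_nat[OF prime_p] by simp
    ultimately have "int p dvd s ^ (p - 1)" by (meson dvd_power dvd_trans)
    with True show ?thesis by (simp add: cong_0_iff)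
  qed (use fermat_theorem_int[OF prime_p] in simp)
  then have "[a + s ^ (p - 1) + int p * t = a + (if int p dvd s then 0 else 1) + 0] (mod int p)"
    by (intro cong_add cong_refl) (auto simp: cong_0_iff)
  then show "[slope y s = a + (if int p dvd s then 0 else 1)] (mod int p)"
    by (simp add: slope)
qed

lemma slope_not_dvd_p:
  assumes "s \<noteq> 0"
  shows "\<not> int p dvd slope y s"
proof
  assume "int p dvd slope y s"
  then have "int p dvd a + (if int p dvd s then 0 else 1)"
    using slope_cong_p[OF assms] by (metis cong_dvd_iff)
  then show False
    using a_not_0_mod_p a_not_minus_1_mod_p by (auto simp: cong_0_iff cong_iff_dvd_diff split: if_splits)
qed

lemma slope_cong_Q:
  assumes "q \<in> Q" and "\<not> int q dvd s"
  shows "[slope y s = 1 + a] (mod int q)"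
proof -
  have "s \<noteq> 0" using assms(2) by auto
  then have "[s * slope y s = s * (1 + a)] (mod int q)"
    using P_diff_cong_Q[OF assms(1), of y s] P_diff_eq_slope[of s y] by (simp add: mult.commute)
  moreover have "prime (int q)" using assms(1) Q_primes by simp
  then have "coprime s (int q)"
    using prime_imp_coprime assms(2) by (metis coprime_commute)
  ultimately show ?thesis by (simp add: cong_mult_lcancel)
qed

definition second_diff :: "int \<Rightarrow> int \<Rightarrow> int \<Rightarrow> int" where
  "second_diff x s h = P (x + s + h) - P (x + s) - P (x + h) + P x"

lemma second_diff_eq_powers: "second_diff x s h = (x + s + h) ^ p - (x + s) ^ p - (x + h) ^ p + x ^ p"
  unfolding second_diff_def P_def by (simp add: algebra_simps)

lemma p_mult_dvd_second_diff: "int p * s * h dvd second_diff x s h"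
  unfolding second_diff_eq_powers using prime_dvd_power_second_diff[OF prime_p] .

lemma Q_dvd_second_diff:
  assumes "q \<in> Q"
  shows "int q dvd second_diff x s h"
proof -
  have "[(P (x + s + h) - P (x + s)) - (P (x + h) - P x) = (1 + a) * h - (1 + a) * h] (mod int q)"
    using P_diff_cong_Q[OF assms, of "x + s" h] P_diff_cong_Q[OF assms, of x h] by (intro cong_diff)
  then show ?thesis unfolding second_diff_def by (simp add: cong_0_iff algebra_simps)
qed

lemma even_second_diff: "even (second_diff x s h)"
proof -
  have pow: "[z ^ p = z] (mod 2)" for z :: int
    using power_cong_self_if_prime_minus_one_dvd[of 2 p z] prime_gt_0_nat[OF prime_p] by simp
  have "[second_diff x s h = (x + s + h) - (x + s) - (x + h) + x] (mod 2)"
    unfolding second_diff_eq_powers by (intro cong_add cong_diff pow)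
  then show ?thesis by (simp add: cong_0_iff)
qed

lemma P_cong_imp_dvd:
  assumes "[P (y + s) = P y] (mod int N)"
  shows "int N dvd s"
proof (cases "s = 0")
  case False
  have N_dvd: "int N dvd P (y + s) - P y" using assms by (simp add: cong_iff_dvd_diff)
  have "int p ^ n dvd s * slope y s"
    using N_dvd int_N_eq P_diff_eq_slope[OF False] by (metis dvd_mult_left)
  moreover have "coprime (int p ^ n) (slope y s)"
    using slope_not_dvd_p[OF False] prime_p by (simp add: prime_imp_coprime)
  ultimately have "int p ^ n dvd s" by (simp add: coprime_dvd_mult_left_iff)
  moreover have "int M dvd s"
  proof (rule M_dvdI)
    fix q assume q: "q \<in> Q"
    have "int q dvd P (y + s) - P y" using N_dvd q_dvd_N[OF q] by (rule dvd_trans[rotated])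
    then have "int q dvd (1 + a) * s" using P_diff_cong_Q[OF q] by (metis cong_dvd_iff)
    moreover have "\<not> int q dvd 1 + a"
      using a_not_minus_1_mod_Q q by (simp add: cong_iff_dvd_diff add.commute)
    moreover have "prime (int q)" using Q_primes q by simp
    ultimately show "int q dvd s" by (simp add: prime_dvd_mult_iff)
  qed
  ultimately show ?thesis
    using coprime_p_M int_N_eq by (simp add: divides_mult)
qed simp

lemma int_pp_map: "int (pp_map N p a b k) = P (int k) mod int N"
  unfolding pp_map_def P_def using N_pos by simp

lemma pp_map_cong: "[int (pp_map N p a b k) = P (int k)] (mod int N)"
  unfolding int_pp_map by (simp add: cong_def)

lemma pp_map_eq_iff: "pp_map N p a b x = pp_map N p a b y \<longleftrightarrow> [P (int x) = P (int y)] (mod int N)"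
proof -
  have "pp_map N p a b x = pp_map N p a b y \<longleftrightarrow> int (pp_map N p a b x) = int (pp_map N p a b y)"
    by simp
  then show ?thesis by (simp add: int_pp_map cong_def)
qed

lemma pp_map_less: "pp_map N p a b k < N"
proof -
  have "int (pp_map N p a b k) < int N" using N_pos by (simp add: int_pp_map)
  then show ?thesis by simp
qed

lemma pp_map_add_N: "pp_map N p a b (k + N) = pp_map N p a b k"
  unfolding pp_map_eq_iff by (intro P_cong) (simp add: cong_def)

lemma inj_on_pp_map: "inj_on (pp_map N p a b) {..<N}"
proof (rule inj_onI)
  fix x y assume "x \<in> {..<N}" "y \<in> {..<N}" "pp_map N p a b x = pp_map N p a b y"
  then have "[P (int x + (int y - int x)) = P (int x)] (mod int N)"
    by (simp add: pp_map_eq_iff cong_sym_eq)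
  then have "int N dvd int y - int x" by (rule P_cong_imp_dvd)
  then have "[x = y] (mod N)"
    by (simp add: cong_int_iff[symmetric] cong_iff_dvd_diff dvd_diff_commute)
  with \<open>x \<in> {..<N}\<close> \<open>y \<in> {..<N}\<close> show "x = y"
    by (simp add: cong_less_modulus_unique_nat)
qed

lemma bij_betw_pp_map: "bij_betw (pp_map N p a b) {..<N} {..<N}"
proof -
  have "pp_map N p a b ` {..<N} \<subseteq> {..<N}"
    using pp_map_less by auto
  then show ?thesis
    using endo_inj_surj[OF finite_lessThan _ inj_on_pp_map] inj_on_pp_map by (simp add: bij_betw_def)
qed

lemma perm_inv_pp_map:
  assumes "k < N"
  shows "perm_inv N (pp_map N p a b) k < N" and "pp_map N p a b (perm_inv N (pp_map N p a b) k) = k"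
  using bij_betw_pp_map assms unfolding perm_inv_def bij_betw_def
  by (metis inv_into_into lessThan_iff, metis f_inv_into_f lessThan_iff)

lemma perm_inv_pp_map_pp_map: "x < N \<Longrightarrow> perm_inv N (pp_map N p a b) (pp_map N p a b x) = x"
  unfolding perm_inv_def using inj_on_pp_map by (simp add: inv_into_f_f)

definition step :: "nat \<Rightarrow> nat \<Rightarrow> nat" where
  "step d x = perm_inv N (pp_map N p a b) ((pp_map N p a b x + d) mod N)"

definition gap :: "nat \<Rightarrow> nat \<Rightarrow> int" where
  "gap d x = int (step d x) - int x"

lemma step_less: "step d x < N"
  unfolding step_def using N_pos by (simp add: perm_inv_pp_map)

lemma P_step_cong: "[P (int (step d x)) = P (int x) + int d] (mod int N)"
proof -
  have "[P (int (step d x)) = int (pp_map N p a b (step d x))] (mod int N)"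
    using pp_map_cong by (rule cong_sym)
  also have "pp_map N p a b (step d x) = (pp_map N p a b x + d) mod N"
    unfolding step_def using N_pos by (simp add: perm_inv_pp_map)
  also have "[int \<dots> = int (pp_map N p a b x) + int d] (mod int N)"
    by (simp add: cong_def zmod_int)
  also have "[int (pp_map N p a b x) + int d = P (int x) + int d] (mod int N)"
    by (intro cong_add pp_map_cong cong_refl)
  finally show ?thesis .
qed

lemma step_unique:
  assumes "z < N" and "[P (int z) = P (int x) + int d] (mod int N)"
  shows "z = step d x"
proof -
  have "[P (int z) = P (int (step d x))] (mod int N)"
    using assms(2) P_step_cong by (metis cong_sym cong_trans)
  then have "pp_map N p a b z = pp_map N p a b (step d x)" by (simp add: pp_map_eq_iff)
  then show ?thesis using inj_on_pp_map assms(1) step_less by (auto dest: inj_onD)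
qed

lemma step_add_N: "step d (x + N) = step d x"
  unfolding step_def pp_map_add_N ..

lemma P_gap_cong: "[P (int x + gap d x) - P (int x) = int d] (mod int N)"
  using P_step_cong[of d x] unfolding gap_def by (simp add: cong_diff_iff_cong_0 cong_iff_dvd_diff algebra_simps)

lemma gap_cong_Q:
  assumes "q \<in> Q"
  shows "[(1 + a) * gap d x = int d] (mod int q)"
proof -
  have "[(1 + a) * gap d x = P (int x + gap d x) - P (int x)] (mod int q)"
    using P_diff_cong_Q[OF assms] by (rule cong_sym)
  also have "[P (int x + gap d x) - P (int x) = int d] (mod int q)"
    using P_gap_cong q_dvd_N[OF assms] by (rule cong_dvd_modulus)
  finally show ?thesis .
qed

lemma
  assumes "\<not> N dvd d"
  shows gap_nonzero: "gap d x \<noteq> 0"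
    and gap_mult_slope_cong: "[gap d x * slope (int x) (gap d x) = int d] (mod int N)"
proof -
  show "gap d x \<noteq> 0"
  proof
    assume "gap d x = 0"
    then have "[0 = int d] (mod int N)" using P_gap_cong[of x d] by simp
    then have "int N dvd int d" by (simp add: cong_iff_dvd_diff)
    with assms show False by simp
  qed
  then show "[gap d x * slope (int x) (gap d x) = int d] (mod int N)"
    using P_gap_cong[of x d] by (simp add: P_diff_eq_slope)
qed

lemma prime_power_dvd_gap_iff:
  assumes "\<not> N dvd d" and "k \<le> n"
  shows "int p ^ k dvd gap d x \<longleftrightarrow> int p ^ k dvd int d"
proof (rule prime_power_dvd_iff_of_mult_cong)
  show "\<not> int p dvd slope (int x) (gap d x)"
    using gap_nonzero[OF assms(1)] by (rule slope_not_dvd_p)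
  have "int p ^ k dvd int N" using assms(2) int_N_eq by (simp add: le_imp_power_dvd dvd_mult2)
  with gap_mult_slope_cong[OF assms(1)]
  show "[gap d x * slope (int x) (gap d x) = int d] (mod int p ^ k)"
    by (rule cong_dvd_modulus)
qed (use prime_p in simp)

section \<open>Shifts that rotate the autocorrelation sums\<close>

definition corr_factor :: "nat \<Rightarrow> nat \<Rightarrow> int \<Rightarrow> int" where
  "corr_factor d h x = slope (x + int d) (int h) * (P (x + int d) - P x)"

text \<open>Under \<open>rotating_shift d h m\<close> (resp. \<open>rotating_shift_inv d h m\<close>) the shift of the summation
  index by \<open>h\<close> multiplies every term of the autocorrelation at \<open>d\<close> of \<open>s \<circ> \<pi>\<close> (resp. of
  \<open>s \<circ> \<pi>\<^sup>-\<^sup>1\<close>) by \<open>half_root N (2 u h r)\<close>, where \<open>r\<close> is \<open>corr_factor d h 0\<close> (resp. \<open>gap d 0\<close>).\<close>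

definition rotating_shift :: "nat \<Rightarrow> nat \<Rightarrow> int \<Rightarrow> bool" where
  "rotating_shift d h m \<longleftrightarrow> int N = int h * m
    \<and> (\<forall>x. int N dvd second_diff x (int d) (int h))
    \<and> (\<forall>x. [corr_factor d h x = corr_factor d h 0] (mod m)) \<and> \<not> m dvd corr_factor d h 0"

definition rotating_shift_inv :: "nat \<Rightarrow> nat \<Rightarrow> int \<Rightarrow> bool" where
  "rotating_shift_inv d h m \<longleftrightarrow> int N = int h * m
    \<and> (\<forall>x. int N dvd second_diff (int x) (gap d x) (int h))
    \<and> (\<forall>x. [gap d x = gap d 0] (mod m)) \<and> \<not> m dvd gap d 0"

definition cofactor :: "nat \<Rightarrow> nat" where
  "cofactor q = p ^ n * \<Prod>(Q - {q})"

lemma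
  assumes "q \<in> Q"
  shows N_eq_cofactor: "int N = int (cofactor q) * int q"
    and q_not_dvd_cofactor: "\<not> int q dvd int (cofactor q)"
proof -
  show "int N = int (cofactor q) * int q"
    unfolding N_eq cofactor_def using finite_Q assms by (simp add: prod.remove ac_simps)
  have q: "prime q" "q \<noteq> p" using Q_primes assms by auto
  have "\<not> q dvd p ^ n"
    using q prime_p by (metis prime_dvd_power primes_dvd_imp_eq)
  moreover have "\<not> q dvd \<Prod>(Q - {q})"
  proof
    assume "q dvd \<Prod>(Q - {q})"
    then obtain q' where "q' \<in> Q - {q}" "q dvd q'"
      using prime_dvd_prod_iff[of "Q - {q}" q "\<lambda>x. x"] finite_Q q by auto
    then show False using Q_primes q by (metis DiffD1 DiffD2 primes_dvd_imp_eq singletonI)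
  qed
  ultimately have "\<not> q dvd cofactor q"
    unfolding cofactor_def using q by (simp add: prime_dvd_mult_iff)
  then show "\<not> int q dvd int (cofactor q)" by simp
qed

lemma N_dvd_second_diff_cofactor:
  assumes "q \<in> Q"
  shows "int N dvd second_diff x s (int (cofactor q))"
proof -
  have "int (cofactor q) dvd second_diff x s (int (cofactor q))"
    by (rule dvd_trans[OF _ p_mult_dvd_second_diff]) simp
  moreover have "int q dvd second_diff x s (int (cofactor q))"
    using assms by (rule Q_dvd_second_diff)
  moreover have "prime (int q)" using assms Q_primes by simp
  then have "coprime (int (cofactor q)) (int q)"
    using q_not_dvd_cofactor[OF assms] prime_imp_coprime coprime_commute by blast
  ultimately show ?thesis using N_eq_cofactor[OF assms] by (simp add: divides_mult)
qed

lemma rotating_shift_cofactor: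
  assumes "q \<in> Q" and "\<not> q dvd d"
  shows "rotating_shift d (cofactor q) (int q)"
proof -
  have cong: "[corr_factor d (cofactor q) x = (1 + a) * ((1 + a) * int d)] (mod int q)" for x
    unfolding corr_factor_def
    using slope_cong_Q[OF assms(1) q_not_dvd_cofactor[OF assms(1)]] P_diff_cong_Q[OF assms(1)]
    by (intro cong_mult) simp_all
  have "prime (int q)" "\<not> int q dvd 1 + a" "\<not> int q dvd int d"
    using assms Q_primes a_not_minus_1_mod_Q by (auto simp: cong_iff_dvd_diff add.commute)
  then have "\<not> int q dvd (1 + a) * ((1 + a) * int d)" by (simp add: prime_dvd_mult_iff)
  then have "\<not> int q dvd corr_factor d (cofactor q) 0" using cong cong_dvd_iff by blast
  moreover have "[corr_factor d (cofactor q) x = corr_factor d (cofactor q) 0] (mod int q)" for x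
    using cong[of x] cong[of 0] cong_sym cong_trans by blast
  ultimately show ?thesis
    unfolding rotating_shift_def
    using N_eq_cofactor[OF assms(1)] N_dvd_second_diff_cofactor[OF assms(1)] by blast
qed

lemma rotating_shift_inv_cofactor:
  assumes "q \<in> Q" and "\<not> q dvd d"
  shows "rotating_shift_inv d (cofactor q) (int q)"
proof -
  have q: "prime (int q)" "\<not> int q dvd 1 + a" "\<not> int q dvd int d"
    using assms Q_primes a_not_minus_1_mod_Q by (auto simp: cong_iff_dvd_diff add.commute)
  then have "coprime (1 + a) (int q)" by (simp add: prime_imp_coprime coprime_commute)
  moreover have "[(1 + a) * gap d x = (1 + a) * gap d 0] (mod int q)" for x
    using gap_cong_Q[OF assms(1), of d x] gap_cong_Q[OF assms(1), of d 0] cong_sym cong_trans by blast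
  ultimately have "[gap d x = gap d 0] (mod int q)" for x by (simp add: cong_mult_lcancel)
  moreover have "\<not> int q dvd gap d 0"
    using gap_cong_Q[OF assms(1), of d 0] q(3) cong_dvd_iff dvd_mult by blast
  ultimately show ?thesis
    unfolding rotating_shift_inv_def
    using N_eq_cofactor[OF assms(1)] N_dvd_second_diff_cofactor[OF assms(1)] by blast
qed

definition p_cofactor :: "nat \<Rightarrow> nat" where
  "p_cofactor j = p ^ (n - Suc j) * M"

lemma N_eq_p_cofactor:
  assumes "j < n"
  shows "int N = int (p_cofactor j) * int p ^ Suc j"
proof -
  have "n = (n - Suc j) + Suc j" using assms by simp
  then have "int p ^ n = int p ^ (n - Suc j) * int p ^ Suc j" by (metis power_add)
  then show ?thesis unfolding int_N_eq p_cofactor_def by simp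
qed

lemma N_dvd_second_diff_p_cofactor:
  assumes "j < n" and "int p ^ j dvd s"
  shows "int N dvd second_diff x s (int (p_cofactor j))"
proof -
  obtain s' where "s = int p ^ j * s'" using assms(2) by blast
  then have "int p * s * int (p_cofactor j) = int N * s'"
    unfolding N_eq_p_cofactor[OF assms(1)] by simp
  then show ?thesis using p_mult_dvd_second_diff by (metis dvd_mult2 dvd_trans dvd_refl)
qed

lemma multiplicity_less_n:
  assumes "0 < d" and "d < N" and "\<forall>q\<in>Q. q dvd d"
  shows "multiplicity p d < n"
proof (rule ccontr)
  assume "\<not> multiplicity p d < n"
  then have "int p ^ n dvd int d" using multiplicity_dvd'[of n p d] by (simp flip: of_nat_power)
  moreover have "int M dvd int d" using assms(3) by (intro M_dvdI) simp
  ultimately have "int N dvd int d"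
    unfolding int_N_eq using coprime_p_M by (simp add: divides_mult)
  with assms(1,2) show False by (simp add: nat_dvd_not_less)
qed

lemma
  assumes "0 < d"
  shows prime_power_multiplicity_dvd: "int p ^ multiplicity p d dvd int d"
    and prime_power_Suc_multiplicity_not_dvd: "\<not> int p ^ Suc (multiplicity p d) dvd int d"
proof -
  have "\<not> is_unit p" using prime_p by auto
  then have "\<not> p ^ Suc (multiplicity p d) dvd d"
    using assms power_dvd_iff_le_multiplicity[of d p "Suc (multiplicity p d)"] by simp
  then show "\<not> int p ^ Suc (multiplicity p d) dvd int d" by (metis int_dvd_int_iff of_nat_power)
  show "int p ^ multiplicity p d dvd int d"
    using multiplicity_dvd[of p d] by (simp flip: of_nat_power)
qed

lemma rotating_shift_p_cofactor:
  assumes "0 < d" and "d < N" and "\<forall>q\<in>Q. q dvd d"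
  defines "j \<equiv> multiplicity p d"
  shows "rotating_shift d (p_cofactor j) (int p ^ Suc j)"
proof -
  define h where "h = int (p_cofactor j)"
  have j: "j < n" "int p ^ j dvd int d" "\<not> int p ^ Suc j dvd int d"
    using multiplicity_less_n prime_power_multiplicity_dvd prime_power_Suc_multiplicity_not_dvd assms
    by simp_all
  have "h \<noteq> 0" unfolding h_def using N_eq_p_cofactor[OF j(1)] by (rule N_factor_nonzero)
  define g where "g x = slope (x + int d) h * slope x (int d)" for x
  have factor: "corr_factor d (p_cofactor j) x = int d * g x" for x
    unfolding corr_factor_def g_def h_def using assms(1) by (simp add: P_diff_eq_slope)
  have "int d \<noteq> 0" using assms(1) by simp
  define c where "c s = a + (if int p dvd s then 0 else 1)" for s
  have "[g x = c h * c (int d)] (mod int p)" for x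
    unfolding g_def c_def
    using slope_cong_p[OF \<open>h \<noteq> 0\<close>] slope_cong_p[OF \<open>int d \<noteq> 0\<close>] by (rule cong_mult)
  then have "[g x = g 0] (mod int p)" for x by (metis cong_sym cong_trans)
  then have "int p ^ j * int p dvd int d * (g x - g 0)" for x
    using j(2) by (intro mult_dvd_mono) (simp_all add: cong_iff_dvd_diff)
  then have "[corr_factor d (p_cofactor j) x = corr_factor d (p_cofactor j) 0] (mod int p ^ Suc j)" for x
    by (simp add: factor cong_iff_dvd_diff algebra_simps)
  moreover have "\<not> int p ^ Suc j dvd corr_factor d (p_cofactor j) 0"
  proof -
    have "\<not> int p dvd g 0"
      unfolding g_def using prime_p slope_not_dvd_p[OF \<open>h \<noteq> 0\<close>] slope_not_dvd_p[of "int d"] assms(1)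
      by (simp add: prime_dvd_mult_iff)
    then have "coprime (int p ^ Suc j) (g 0)"
      using prime_p by (simp add: prime_imp_coprime coprime_power_left_iff)
    then show ?thesis using j(3) by (simp add: factor coprime_dvd_mult_left_iff)
  qed
  ultimately show ?thesis
    unfolding rotating_shift_def
    using N_eq_p_cofactor[OF j(1)] N_dvd_second_diff_p_cofactor[OF j(1,2)] by blast
qed

lemma rotating_shift_inv_p_cofactor:
  assumes "0 < d" and "d < N" and "\<forall>q\<in>Q. q dvd d"
  defines "j \<equiv> multiplicity p d"
  shows "rotating_shift_inv d (p_cofactor j) (int p ^ Suc j)"
proof -
  have j: "j < n" "int p ^ j dvd int d" "\<not> int p ^ Suc j dvd int d"
    using multiplicity_less_n prime_power_multiplicity_dvd prime_power_Suc_multiplicity_not_dvd assms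
    by simp_all
  have d: "\<not> N dvd d" using assms(1,2) by (simp add: nat_dvd_not_less)
  have dvd_gap_iff: "int p ^ k dvd gap d x \<longleftrightarrow> int p ^ k dvd int d" if "k \<le> n" for k x
    using prime_power_dvd_gap_iff[OF d that] .
  have slope_cong: "[slope (int x) (gap d x) = a + (if int p dvd int d then 0 else 1)] (mod int p)" for x
    using slope_cong_p[OF gap_nonzero[OF d, of x], of "int x"] dvd_gap_iff[of 1 x] j(1) by simp
  have gap_cong: "[gap d x * slope (int x) (gap d x) = int d] (mod int p ^ Suc j)" for x
    using gap_mult_slope_cong[OF d] N_eq_p_cofactor[OF j(1)] by (metis cong_dvd_modulus dvd_triv_right)
  have "int p ^ Suc j dvd gap d x - gap d 0" for x
    using prime_p slope_not_dvd_p[OF gap_nonzero[OF d]] j(2) gap_cong[of x] gap_cong[of 0]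
      cong_trans[OF slope_cong[of x] cong_sym[OF slope_cong[of 0]]]
    by (intro prime_power_dvd_diff_of_mult_cong[of "int p"]) simp_all
  moreover have "int N dvd second_diff (int x) (gap d x) (int (p_cofactor j))" for x
    using j dvd_gap_iff[of j x] by (intro N_dvd_second_diff_p_cofactor) simp_all
  moreover have "\<not> int p ^ Suc j dvd gap d 0" using dvd_gap_iff[of "Suc j" 0] j by simp
  ultimately show ?thesis
    unfolding rotating_shift_inv_def using N_eq_p_cofactor[OF j(1)]
    by (simp add: cong_iff_dvd_diff)
qed

lemma
  assumes "0 < d" and "d < N"
  shows ex_rotating_shift: "\<exists>h m. rotating_shift d h m"
    and ex_rotating_shift_inv: "\<exists>h m. rotating_shift_inv d h m"
proof -
  consider q where "q \<in> Q" "\<not> q dvd d" | "\<forall>q\<in>Q. q dvd d" by blast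
  then have "(\<exists>h m. rotating_shift d h m) \<and> (\<exists>h m. rotating_shift_inv d h m)"
  proof cases
    case 1
    then show ?thesis using rotating_shift_cofactor rotating_shift_inv_cofactor by blast
  next
    case 2
    then show ?thesis using assms rotating_shift_p_cofactor rotating_shift_inv_p_cofactor by blast
  qed
  then show "\<exists>h m. rotating_shift d h m" "\<exists>h m. rotating_shift_inv d h m" by blast+
qed

lemma zc_phase_P_shift_cong:
  assumes "rotating_shift d h m"
  shows "[zc_phase N l (P (x + int d + int h)) - zc_phase N l (P (x + int h))
    = zc_phase N l (P (x + int d)) - zc_phase N l (P x) + 2 * int h * corr_factor d h 0] (mod 2 * int N)"
proof -
  have N: "int N = int h * m" and W: "int N dvd second_diff x (int d) (int h)"
    and cf: "[corr_factor d h x = corr_factor d h 0] (mod m)"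
    using assms unfolding rotating_shift_def by blast+
  have "int h \<noteq> 0" using N by (rule N_factor_nonzero)
  then have V: "(P (x + int d + int h) - P (x + int d)) * (P (x + int d) - P x) = int h * corr_factor d h x"
    unfolding corr_factor_def by (simp add: P_diff_eq_slope)
  have "[zc_phase N l (P (x + int d + int h)) - zc_phase N l (P (x + int h))
      - (zc_phase N l (P (x + int d)) - zc_phase N l (P x))
      = 2 * (P (x + int d + int h) - P (x + int d)) * (P (x + int d) - P x)] (mod 2 * int N)"
    using W even_second_diff[of x "int d" "int h"]
    by (intro zc_phase_second_diff) (simp_all add: second_diff_def algebra_simps)
  also have "2 * (P (x + int d + int h) - P (x + int d)) * (P (x + int d) - P x) = 2 * int h * corr_factor d h x"
    using V by (simp only: mult.assoc)
  also have "[\<dots> = 2 * int h * corr_factor d h 0] (mod 2 * int N)"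
    unfolding N using cf by (simp add: cong_iff_dvd_diff right_diff_distrib[symmetric] mult.assoc)
  finally show ?thesis by (simp add: cong_iff_dvd_diff algebra_simps)
qed

lemma step_add_shift:
  assumes "rotating_shift_inv d h m"
  shows "step d (x + h) = (step d x + h) mod N"
proof (rule sym, rule step_unique)
  show "(step d x + h) mod N < N" using N_pos by simp
  have W: "int N dvd second_diff (int x) (gap d x) (int h)"
    using assms unfolding rotating_shift_inv_def by blast
  have "int N dvd P (int x + gap d x) - P (int x) - int d"
    using P_gap_cong by (simp add: cong_iff_dvd_diff)
  moreover have "P (int (step d x) + int h) - (P (int x + int h) + int d)
      = second_diff (int x) (gap d x) (int h) + (P (int x + gap d x) - P (int x) - int d)"
    unfolding second_diff_def gap_def by (simp add: algebra_simps)
  ultimately have "int N dvd P (int (step d x) + int h) - (P (int x + int h) + int d)"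
    using W by (metis dvd_add)
  then have "[P (int (step d x) + int h) = P (int (x + h)) + int d] (mod int N)"
    by (simp add: cong_iff_dvd_diff)
  moreover have "[P (int ((step d x + h) mod N)) = P (int (step d x) + int h)] (mod int N)"
    by (intro P_cong) (simp add: cong_def zmod_int)
  ultimately show "[P (int ((step d x + h) mod N)) = P (int (x + h)) + int d] (mod int N)"
    by (rule cong_trans[rotated])
qed

lemma zc_phase_step_shift_cong:
  assumes "rotating_shift_inv d h m"
  shows "[zc_phase N l (int (step d x) + int h) - zc_phase N l (int x + int h)
    = zc_phase N l (int (step d x)) - zc_phase N l (int x) + 2 * int h * gap d 0] (mod 2 * int N)"
proof -
  have N: "int N = int h * m" and cong: "[gap d x = gap d 0] (mod m)"
    using assms unfolding rotating_shift_inv_def by blast+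
  have "zc_phase N l (int (step d x) + int h) - zc_phase N l (int x + int h)
      = zc_phase N l (int (step d x)) - zc_phase N l (int x) + 2 * int h * gap d x"
    unfolding zc_phase_def gap_def power2_eq_square by (simp add: algebra_simps)
  moreover have "[2 * int h * gap d x = 2 * int h * gap d 0] (mod 2 * int N)"
    unfolding N using cong by (simp add: cong_iff_dvd_diff right_diff_distrib[symmetric] mult.assoc)
  ultimately show ?thesis by (simp add: cong_add_lcancel)
qed

lemma zc_val_P_cong: "[x = y] (mod int N) \<Longrightarrow> zc_val N u l (P x) = zc_val N u l (P y)"
  using N_pos by (intro zc_val_cong P_cong)

end

section \<open>Autocorrelations of the interleaved sequences\<close>

locale zc_interleaving = pp_modulus +
  fixes u l :: int
  assumes coprime_u_N: "coprime u (int N)"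
begin

lemma half_root_shift_neq_1:
  assumes "int N = int h * m" and "\<not> m dvd y"
  shows "half_root N (2 * u * int h * y) \<noteq> 1"
proof
  assume "half_root N (2 * u * int h * y) = 1"
  then have "int h * m dvd int h * (u * y)"
    using half_root_eq_1_iff[OF N_pos] assms(1) by (simp add: ac_simps)
  moreover have "int h \<noteq> 0" using assms(1) by (rule N_factor_nonzero)
  ultimately have "m dvd u * y" by simp
  moreover have "coprime m u"
    using coprime_u_N assms(1) by (metis coprime_commute coprime_divisors dvd_refl dvd_triv_right)
  ultimately show False using assms(2) by (simp add: coprime_dvd_mult_right_iff)
qed

lemma autocorr_pp_map_eq_sum:
  "autocorr N (interleave (zc_seq N u l) (pp_map N p a b)) d
    = (\<Sum>k<N. zc_val N u l (P (int k)) * cnj (zc_val N u l (P (int k + int d))))"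
proof -
  have "zc_seq N u l (pp_map N p a b k) = zc_val N u l (P (int k))" for k
    unfolding zc_seq_eq_zc_val using N_pos pp_map_cong by (rule zc_val_cong)
  moreover have "zc_val N u l (P (int ((k + d) mod N))) = zc_val N u l (P (int k + int d))" for k
    by (intro zc_val_P_cong) (simp add: cong_def zmod_int)
  ultimately show ?thesis unfolding autocorr_def interleave_def by simp
qed

lemma autocorr_pp_map_eq_0:
  assumes "rotating_shift d h m"
  shows "autocorr N (interleave (zc_seq N u l) (pp_map N p a b)) d = 0"
proof -
  define T where "T k = zc_val N u l (P (int k)) * cnj (zc_val N u l (P (int k + int d)))" for k
  define w where "w = half_root N (2 * u * int h * corr_factor d h 0)"
  have "(\<Sum>k<N. T k) = 0"
  proof (rule sum_periodic_eq_0_if_shift_mult)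
    show "T (k + N) = T k" for k
    proof -
      have "[int (k + N) = int k] (mod int N)" "[int (k + N) + int d = int k + int d] (mod int N)"
        by (simp_all add: cong_iff_dvd_diff)
      then show ?thesis unfolding T_def by (simp only: zc_val_P_cong)
    qed
    show "T (k + h) = T k * w" for k
    proof -
      define x where "x = int k"
      have "T (k + h) = half_root N (u * (zc_phase N l (P (x + int d + int h)) - zc_phase N l (P (x + int h))))"
        unfolding T_def zc_val_mult_cnj x_def by (simp add: ac_simps)
      also have "\<dots> = half_root N (u * (zc_phase N l (P (x + int d)) - zc_phase N l (P x))
          + 2 * u * int h * corr_factor d h 0)"
        using N_pos cong_scalar_left[OF zc_phase_P_shift_cong[OF assms, of l x], of u]
        by (intro half_root_cong) (simp_all add: distrib_left mult_ac)
      also have "\<dots> = T k * w"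
        unfolding T_def w_def x_def zc_val_mult_cnj half_root_add ..
      finally show ?thesis .
    qed
    show "w \<noteq> 1"
      using assms unfolding rotating_shift_def w_def by (intro half_root_shift_neq_1) auto
  qed
  then show ?thesis unfolding autocorr_pp_map_eq_sum T_def .
qed

lemma autocorr_perm_inv_eq_sum:
  "autocorr N (interleave (zc_seq N u l) (perm_inv N (pp_map N p a b))) d
    = (\<Sum>x<N. zc_seq N u l x * cnj (zc_seq N u l (step d x)))"
proof -
  define \<sigma> where "\<sigma> = perm_inv N (pp_map N p a b)"
  define g where "g k = zc_seq N u l (\<sigma> k) * cnj (zc_seq N u l (\<sigma> ((k + d) mod N)))" for k
  have "autocorr N (interleave (zc_seq N u l) \<sigma>) d = (\<Sum>k<N. g k)"
    unfolding autocorr_def interleave_def g_def ..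
  also have "\<dots> = (\<Sum>x<N. g (pp_map N p a b x))"
    using sum.reindex_bij_betw[OF bij_betw_pp_map, of g] by simp
  also have "\<dots> = (\<Sum>x<N. zc_seq N u l x * cnj (zc_seq N u l (step d x)))"
    by (intro sum.cong refl) (simp add: g_def step_def \<sigma>_def perm_inv_pp_map_pp_map)
  finally show ?thesis unfolding \<sigma>_def .
qed

lemma autocorr_perm_inv_eq_0:
  assumes "rotating_shift_inv d h m"
  shows "autocorr N (interleave (zc_seq N u l) (perm_inv N (pp_map N p a b))) d = 0"
proof -
  define T where "T x = zc_seq N u l x * cnj (zc_seq N u l (step d x))" for x
  define w where "w = half_root N (2 * u * int h * gap d 0)"
  have zc_mod: "zc_seq N u l (k mod N) = zc_seq N u l k" for k
    unfolding zc_seq_eq_zc_val using N_pos by (intro zc_val_cong) (simp_all add: cong_def of_nat_mod)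
  have "(\<Sum>x<N. T x) = 0"
  proof (rule sum_periodic_eq_0_if_shift_mult)
    show "T (k + N) = T k" for k
      unfolding T_def step_add_N using zc_mod[of "k + N"] zc_mod[of k] by simp
    show "T (k + h) = T k * w" for k
    proof -
      have "T (k + h) = zc_val N u l (int k + int h) * cnj (zc_val N u l (int (step d k) + int h))"
        unfolding T_def step_add_shift[OF assms] zc_mod by (simp add: zc_seq_eq_zc_val)
      also have "\<dots> = half_root N (u * (zc_phase N l (int (step d k) + int h) - zc_phase N l (int k + int h)))"
        by (rule zc_val_mult_cnj)
      also have "\<dots> = half_root N (u * (zc_phase N l (int (step d k)) - zc_phase N l (int k))
          + 2 * u * int h * gap d 0)"
        using N_pos cong_scalar_left[OF zc_phase_step_shift_cong[OF assms, of l k], of u]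
        by (intro half_root_cong) (simp_all add: distrib_left mult_ac)
      also have "\<dots> = T k * w"
        unfolding T_def w_def zc_seq_eq_zc_val zc_val_mult_cnj half_root_add ..
      finally show ?thesis .
    qed
    show "w \<noteq> 1"
      using assms unfolding rotating_shift_inv_def w_def by (intro half_root_shift_neq_1) auto
  qed
  then show ?thesis unfolding autocorr_perm_inv_eq_sum T_def .
qed

lemma CAZAC_interleave_zc_seq:
  assumes "\<And>d. 0 < d \<Longrightarrow> d < N \<Longrightarrow> autocorr N (interleave (zc_seq N u l) \<sigma>) d = 0"
  shows "CAZAC N (interleave (zc_seq N u l) \<sigma>)"
  unfolding CAZAC_def using assms by (simp add: interleave_def zc_seq_eq_zc_val norm_zc_val)

theorem CAZAC_interleave_pp_map: "CAZAC N (interleave (zc_seq N u l) (pp_map N p a b))"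
  using ex_rotating_shift autocorr_pp_map_eq_0 by (blast intro: CAZAC_interleave_zc_seq)

theorem CAZAC_interleave_perm_inv: "CAZAC N (interleave (zc_seq N u l) (perm_inv N (pp_map N p a b)))"
  using ex_rotating_shift_inv autocorr_perm_inv_eq_0 by (blast intro: CAZAC_interleave_zc_seq)

end

theorem theorem1:
  fixes p n N :: nat and Q :: "nat set" and a b u l :: int
  assumes "prime p" and "p \<ge> 3" and "n \<ge> 2"
    and "finite Q" and "\<forall>q\<in>Q. prime q \<and> q \<noteq> p \<and> (q - 1) dvd (p - 1)"
    and "N = p ^ n * (\<Prod>Q)"
    and "\<not> [a = 0] (mod int p)" and "\<not> [a = -1] (mod int p)"
    and "\<forall>q\<in>Q. \<not> [a = -1] (mod int q)"
    and "coprime u (int N)"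
  shows "bij_betw (pp_map N p a b) {..<N} {..<N}
    \<and> CAZAC N (interleave (zc_seq N u l) (pp_map N p a b))
    \<and> CAZAC N (interleave (zc_seq N u l) (perm_inv N (pp_map N p a b)))"
proof -
  interpret zc_interleaving p n Q a b N u l
    using assms by unfold_locales auto
  show ?thesis
    using bij_betw_pp_map CAZAC_interleave_pp_map CAZAC_interleave_perm_inv by blast
qed

end
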